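(* Let $p$ and $p'$ be consecutive patterns of the same length that are both non-overlapping and are interchangeable. Then $p$ and $p'$ are super-strongly Wilf equivalent.
   Context: An inversion sequence of length $n$ is an integer sequence $e=e_1e_2\dots e_n$ with $0\le e_i<i$ for all $i$; $\mathbf{I}_n$ denotes the set of these. A pattern of length $r$ is a sequence $p=p_1\dots p_r$ with $p_i\in\{0,\dots,r-1\}$ such that whenever a value $j>0$ appears in $p$, the value $j-1$ also appears. The reduction of an integer word $w$ is obtained by replacing every occurrence of the $i$-th smallest distinct value of $w$ by $i-1$. An inversion sequence $e$ has an occurrence of the consecutive pattern $p$ in position $i$ if the reduction of $e_i\dots e_{i+r-1}$ equals $p$; $\mathrm{Em}(p,e)$ is the set of such positions. $p=p_1\dots p_r$ is non-overlapping if for every $1<i<r$ the reductions of $p_1\dots p_i$ and $p_{r-i+1}\dots p_r$ differ. Given patterns $p,p'$ of length $r$ with $p_1=p'_1$, $p_r=p'_r$ and $\max_i p_i=\max_i p'_i$, $p$ is changeable for $p'$ if for all $1\le i\le r$, $p'_i\le\max(\{p_j:1\le j\le i\}\cup\{p_j-j+i: i<j\le r\})$; $p$ and $p'$ are interchangeable if each is changeable for the other. Two patterns are super-strongly Wilf equivalent if $|\{e\in\mathbf{I}_n:\mathrm{Em}(p,e)=T\}|=|\{e\in\mathbf{I}_n:\mathrm{Em}(p',e)=T\}|$ for all $n$ and all $T\subseteq[n]$. *)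

theory Defs
  imports Main
begin

text \<open>Words are lists of naturals; positions are 1-indexed as in the paper,
  so the paper's e_i is  e ! (i - 1).\<close>

definition inv_seqs :: "nat \<Rightarrow> nat list set" where
  "inv_seqs n = {e. length e = n \<and> (\<forall>i<n. e ! i < Suc i)}"

text \<open>Reduction: the i-th smallest distinct value (i \<ge> 1) becomes i - 1, i.e.
  each value is replaced by the number of distinct values of the word below it.\<close>
definition reduction :: "nat list \<Rightarrow> nat list" where
  "reduction w = map (\<lambda>x. card {y \<in> set w. y < x}) w"

definition is_pattern :: "nat list \<Rightarrow> bool" where
  "is_pattern p \<longleftrightarrow> (\<forall>i<length p. p ! i < length p) \<and>
     (\<forall>j \<in> set p. 0 < j \<longrightarrow> j - 1 \<in> set p)"

definition factor :: "nat list \<Rightarrow> nat \<Rightarrow> nat \<Rightarrow> nat list" where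
  "factor e i r = take r (drop (i - 1) e)"

definition Em :: "nat list \<Rightarrow> nat list \<Rightarrow> nat set" where
  "Em p e = {i. 1 \<le> i \<and> i + length p - 1 \<le> length e \<and>
                reduction (factor e i (length p)) = p}"

definition non_overlapping :: "nat list \<Rightarrow> bool" where
  "non_overlapping p \<longleftrightarrow>
     (\<forall>i. 1 < i \<and> i < length p \<longrightarrow>
        reduction (take i p) \<noteq> reduction (drop (length p - i) p))"

text \<open>Changeable, with the paper's standing conditions (same length r,
  p_1 = p'_1, p_r = p'_r, equal maxima) included. The shifted values p_j - j + i are computed in int.\<close>
definition changeable :: "nat list \<Rightarrow> nat list \<Rightarrow> bool" where
  "changeable p p' \<longleftrightarrow>
     (let r = length p in
      length p' = r \<and> r \<ge> 1 \<and> p ! 0 = p' ! 0 \<and> p ! (r - 1) = p' ! (r - 1) \<and>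
      Max (set p) = Max (set p') \<and>
      (\<forall>i\<in>{1..r}. int (p' ! (i - 1)) \<le>
          Max ((\<lambda>j. int (p ! (j - 1))) ` {1..i} \<union>
               (\<lambda>j. int (p ! (j - 1)) - int j + int i) ` {i<..r})))"

definition interchangeable :: "nat list \<Rightarrow> nat list \<Rightarrow> bool" where
  "interchangeable p p' \<longleftrightarrow> changeable p p' \<and> changeable p' p"

definition super_strongly_wilf_equiv :: "nat list \<Rightarrow> nat list \<Rightarrow> bool" where
  "super_strongly_wilf_equiv p p' \<longleftrightarrow>
     (\<forall>n. \<forall>T \<subseteq> {1..n}.
        card {e \<in> inv_seqs n. Em p e = T} = card {e \<in> inv_seqs n. Em p' e = T})"

end

theory Submission
  imports Defs
begin

text \<open>Fix a set T of positions. Counting inversion sequences with prescribed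
  occurrence set Em p e = T reduces, by inclusion-exclusion over the supersets of T,
  to counting those with T \<subseteq> Em p e. For the latter there is an explicit bijection:
  since p is non-overlapping, two windows of length r starting in T share at most one
  entry, which is a first or last entry of the pattern, where p and p' agree. Inside
  each window, the value occupying rank p'_k is moved to position k, turning the
  occurrence of p into one of p'. The changeability of p for p' guarantees that the
  moved values still satisfy e_i < i, and the inverse map is the same rearrangement
  from p' back to p.\<close>

definition rank_in :: "nat set \<Rightarrow> nat \<Rightarrow> nat" where
  "rank_in A x = card {y \<in> A. y < x}"

lemma reduction_eq_map_rank_in: "reduction w = map (rank_in (set w)) w"
  by (simp add: reduction_def rank_in_def)

lemma rank_in_strict_mono:
  assumes "finite A" "x \<in> A" "x < y" shows "rank_in A x < rank_in A y"
proof -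
  have "{z \<in> A. z < x} \<subset> {z \<in> A. z < y}" using assms by auto
  then show ?thesis unfolding rank_in_def by (intro psubset_card_mono) (auto simp: assms)
qed

lemma rank_in_less_iff:
  "finite A \<Longrightarrow> x \<in> A \<Longrightarrow> y \<in> A \<Longrightarrow> rank_in A x < rank_in A y \<longleftrightarrow> x < y"
  using rank_in_strict_mono[of A x y] rank_in_strict_mono[of A y x]
  by (metis less_asym linorder_neqE_nat)

lemma rank_in_le_iff:
  "finite A \<Longrightarrow> x \<in> A \<Longrightarrow> y \<in> A \<Longrightarrow> rank_in A x \<le> rank_in A y \<longleftrightarrow> x \<le> y"
  using rank_in_less_iff[of A y x] by (simp add: not_less[symmetric])

lemma rank_in_le_add_diff:
  assumes "finite A" shows "rank_in A y \<le> rank_in A x + (y - x)"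
proof -
  have "{z \<in> A. z < y} \<subseteq> {z \<in> A. z < x} \<union> {x..<y}" by auto
  then have "card {z \<in> A. z < y} \<le> card ({z \<in> A. z < x} \<union> {x..<y})"
    by (intro card_mono) (auto simp: assms)
  also have "\<dots> \<le> card {z \<in> A. z < x} + card {x..<y}" by (rule card_Un_le)
  finally show ?thesis by (simp add: rank_in_def)
qed

lemma reduction_map_order_preserving:
  assumes "\<And>x y. x \<in> set w \<Longrightarrow> y \<in> set w \<Longrightarrow> f x < f y \<longleftrightarrow> x < y"
  shows "reduction (map f w) = reduction w"
proof -
  have inj: "inj_on f (set w)"
    by (rule inj_onI) (metis assms linorder_neqE_nat order_less_irrefl)
  have "rank_in (f ` set w) (f x) = rank_in (set w) x" if "x \<in> set w" for x
  proof -
    have "{y \<in> f ` set w. y < f x} = f ` {y \<in> set w. y < x}"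
      using assms that by auto
    moreover have "inj_on f {y \<in> set w. y < x}" using inj by (rule inj_on_subset) auto
    ultimately show ?thesis unfolding rank_in_def by (simp add: card_image)
  qed
  then show ?thesis by (simp add: reduction_eq_map_rank_in)
qed

lemma reduction_map_rank_in:
  "set v \<subseteq> A \<Longrightarrow> finite A \<Longrightarrow> reduction (map (rank_in A) v) = reduction v"
  by (rule reduction_map_order_preserving) (meson rank_in_less_iff subsetD)

lemma reduction_take_reduction: "reduction (take d (reduction w)) = reduction (take d w)"
  by (simp add: reduction_eq_map_rank_in[of w] take_map reduction_map_rank_in set_take_subset)

lemma reduction_drop_reduction: "reduction (drop d (reduction w)) = reduction (drop d w)"
  by (simp add: reduction_eq_map_rank_in[of w] drop_map reduction_map_rank_in set_drop_subset)

lemma reduction_reduction: "reduction (reduction w) = reduction w"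
  by (subst (2) reduction_eq_map_rank_in) (simp add: reduction_map_rank_in)

lemma reduction_eq_self_if_same_set:
  assumes "reduction p = p" "set q = set p" shows "reduction q = q"
proof -
  have "rank_in (set p) x = x" if "x \<in> set p" for x
  proof -
    obtain j where "j < length p" "x = p ! j" using \<open>x \<in> set p\<close> by (auto simp: in_set_conv_nth)
    then show ?thesis using arg_cong[OF assms(1), of "\<lambda>w. w ! j"]
      by (simp add: reduction_eq_map_rank_in)
  qed
  then show ?thesis using assms(2) unfolding reduction_eq_map_rank_in[of q] by (intro map_idI) auto
qed

lemma down_closed_atMost:
  assumes "(M::nat) \<in> S" and "\<And>j. j \<in> S \<Longrightarrow> 0 < j \<Longrightarrow> j - 1 \<in> S"
  shows "{..M} \<subseteq> S"
proof -
  have "M - k \<in> S" for k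
  proof (induction k)
    case (Suc k)
    have "M - Suc k = M - k - 1" by simp
    then show ?case
      using Suc assms(2)[of "M - k"] by (cases "M - k = 0") simp_all
  qed (use assms in simp)
  then show ?thesis by (metis atMost_iff diff_diff_cancel subsetI)
qed

lemma is_pattern_set_eq:
  assumes "is_pattern p" "p \<noteq> []" shows "set p = {..Max (set p)}"
proof
  show "{..Max (set p)} \<subseteq> set p"
    using assms by (intro down_closed_atMost) (auto simp: is_pattern_def)
qed auto

lemma changeable_nth_le:
  assumes "changeable p q" "k < length p"
  obtains j where "j < length p" "j \<le> k" "q ! k \<le> p ! j"
    | j where "j < length p" "k < j" "q ! k + (j - k) \<le> p ! j"
proof -
  define r where "r = length p"
  define S where "S = (\<lambda>j. int (p ! (j - 1))) ` {1..k+1} \<union>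
    (\<lambda>j. int (p ! (j - 1)) - int j + int (k+1)) ` {k+1<..r}"
  have "\<forall>i\<in>{1..r}. int (q ! (i - 1)) \<le> Max ((\<lambda>j. int (p ! (j - 1))) ` {1..i} \<union>
      (\<lambda>j. int (p ! (j - 1)) - int j + int i) ` {i<..r})"
    using assms(1) unfolding changeable_def Let_def r_def by blast
  moreover have "k + 1 \<in> {1..r}" using assms(2) by (simp add: r_def)
  ultimately have "int (q ! k) \<le> Max S" unfolding S_def by fastforce
  moreover have "Max S \<in> S" unfolding S_def by (rule Max_in) auto
  ultimately consider j where "j \<in> {1..k+1}" "int (q ! k) \<le> int (p ! (j - 1))"
    | j where "j \<in> {k+1<..r}" "int (q ! k) \<le> int (p ! (j - 1)) - int j + int (k+1)"
    unfolding S_def by fastforce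
  then show ?thesis
  proof cases
    case (1 j)
    then show ?thesis using assms(2) by (intro that(1)[of "j - 1"]) auto
  next
    case (2 j)
    then have "j - 1 < length p" "k < j - 1" "q ! k + (j - 1 - k) \<le> p ! (j - 1)"
      by (auto simp: r_def)
    then show ?thesis by (rule that(2))
  qed
qed

lemma EmD:
  assumes "t \<in> Em p e"
  shows "1 \<le> t" "t + length p - 1 \<le> length e" "reduction (factor e t (length p)) = p"
    "length (factor e t (length p)) = length p"
    "\<And>k. k < length p \<Longrightarrow> factor e t (length p) ! k = e ! (t - 1 + k)"
  using assms by (auto simp: Em_def factor_def)

lemma Em_nth_rank:
  assumes "t \<in> Em p e" "k < length p"
  shows "e ! (t - 1 + k) \<in> set (factor e t (length p))"
    and "rank_in (set (factor e t (length p))) (e ! (t - 1 + k)) = p ! k"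
proof -
  show "e ! (t - 1 + k) \<in> set (factor e t (length p))"
    using EmD(4,5)[OF assms(1)] assms(2) by (metis nth_mem)
  have "reduction (factor e t (length p)) ! k = p ! k" using EmD(3)[OF assms(1)] by simp
  then show "rank_in (set (factor e t (length p))) (e ! (t - 1 + k)) = p ! k"
    using EmD(4,5)[OF assms(1)] assms(2) by (simp add: reduction_eq_map_rank_in)
qed

lemma Em_nth_le_iff:
  assumes "t \<in> Em p e" "j < length p" "j' < length p"
  shows "e ! (t - 1 + j) \<le> e ! (t - 1 + j') \<longleftrightarrow> p ! j \<le> p ! j'"
  using rank_in_le_iff[OF finite_set Em_nth_rank(1)[OF assms(1,2)] Em_nth_rank(1)[OF assms(1,3)]]
  unfolding Em_nth_rank(2)[OF assms(1,2)] Em_nth_rank(2)[OF assms(1,3)] by (rule sym)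

lemma Em_nth_eq:
  assumes "t \<in> Em p e" "j < length p" "j' < length p" "p ! j = p ! j'"
  shows "e ! (t - 1 + j) = e ! (t - 1 + j')"
  using Em_nth_le_iff[OF assms(1-3)] Em_nth_le_iff[OF assms(1,3,2)] assms(4) by simp

lemma Em_nth_le_add_diff:
  assumes "t \<in> Em p e" "j < length p" "j' < length p"
  shows "p ! j' \<le> p ! j + (e ! (t - 1 + j') - e ! (t - 1 + j))"
  using rank_in_le_add_diff[OF finite_set[of "factor e t (length p)"],
      of "e ! (t - 1 + j')" "e ! (t - 1 + j)"]
  unfolding Em_nth_rank(2)[OF assms(1,2)] Em_nth_rank(2)[OF assms(1,3)] .

lemma non_overlapping_Em_gap:
  assumes no: "non_overlapping p" and t: "t \<in> Em p e" and t': "t' \<in> Em p e" and "t < t'"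
  shows "t + length p \<le> t' + 1"
proof (rule ccontr, unfold not_le)
  assume close: "t' + 1 < t + length p"
  define r where "r = length p"
  define d where "d = t' - t"
  define L where "L = r - d"
  have d: "1 \<le> d" "d + 2 \<le> r" and L: "1 < L" "L < r"
    using \<open>t < t'\<close> close by (auto simp: d_def r_def L_def)
  have "drop d (factor e t r) = take L (drop (t' - 1) e)"
    unfolding factor_def L_def d_def using \<open>t < t'\<close> EmD(1)[OF t]
    by (simp add: drop_take add.commute)
  then have "reduction (drop d p) = reduction (take L (drop (t' - 1) e))"
    using reduction_drop_reduction[of d "factor e t r"] EmD(3)[OF t] by (simp add: r_def)
  also have "take L (drop (t' - 1) e) = take L (factor e t' r)"
    unfolding factor_def using L by simp
  also have "reduction \<dots> = reduction (take L p)"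
    using reduction_take_reduction[of L "factor e t' r"] EmD(3)[OF t'] by (simp add: r_def)
  finally have "reduction (take L p) = reduction (drop (length p - L) p)"
    using d by (simp add: L_def r_def)
  with no L show False unfolding non_overlapping_def r_def by blast
qed

lemma changeable_Em_nth_le:
  assumes ch: "changeable p q" and t: "t \<in> Em p e" and e: "\<forall>i<length e. e ! i < Suc i"
    and k: "k < length p" and j: "j < length p" "p ! j = q ! k"
  shows "e ! (t - 1 + j) \<le> t - 1 + k"
proof -
  have bounded: "e ! (t - 1 + j') \<le> t - 1 + j'" if "j' < length p" for j'
    using e EmD(1,2)[OF t] that by (simp add: less_Suc_eq_le)
  from ch k show ?thesis
  proof (rule changeable_nth_le)
    fix j' assume "j' < length p" "j' \<le> k" "q ! k \<le> p ! j'"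
    then show ?thesis using Em_nth_le_iff[OF t j(1), of j'] bounded[of j'] j(2) by simp
  next
    fix j' assume j': "j' < length p" "k < j'" "q ! k + (j' - k) \<le> p ! j'"
    then show ?thesis using Em_nth_le_add_diff[OF t j(1) j'(1)] bounded[OF j'(1)] j(2) by linarith
  qed
qed

definition same_ends_and_values :: "nat list \<Rightarrow> nat list \<Rightarrow> bool" where
  "same_ends_and_values p q \<longleftrightarrow> length q = length p \<and> 1 \<le> length p \<and> p ! 0 = q ! 0 \<and>
     p ! (length p - 1) = q ! (length p - 1) \<and> set p = set q"

lemma same_ends_and_values_sym: "same_ends_and_values p q \<Longrightarrow> same_ends_and_values q p"
  by (auto simp: same_ends_and_values_def)

lemma changeable_same_ends_and_values:
  assumes "is_pattern p" "is_pattern q" "changeable p q"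
  shows "same_ends_and_values p q"
proof -
  have "length q = length p" "1 \<le> length p" "Max (set p) = Max (set q)"
    using assms(3) by (auto simp: changeable_def Let_def)
  then have "set p = set q"
    using is_pattern_set_eq[OF assms(1)] is_pattern_set_eq[OF assms(2)] by fastforce
  then show ?thesis using assms(3) by (auto simp: changeable_def Let_def same_ends_and_values_def)
qed

definition source_index :: "nat list \<Rightarrow> nat list \<Rightarrow> nat \<Rightarrow> nat" where
  "source_index p q k = (SOME j. j < length p \<and> p ! j = q ! k)"

lemma source_index_correct:
  assumes "same_ends_and_values p q" "k < length p"
  shows "source_index p q k < length p" "p ! source_index p q k = q ! k"
proof -
  have "\<exists>j. j < length p \<and> p ! j = q ! k"
    using assms nth_mem[of k q] by (auto simp: same_ends_and_values_def in_set_conv_nth)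
  from someI_ex[OF this] show "source_index p q k < length p" "p ! source_index p q k = q ! k"
    unfolding source_index_def by auto
qed

text \<open>Positions i are 0-indexed while window starts t are 1-indexed, as in Em:
  in_window r T i t says that e ! i is an inner entry (neither the first nor the last)
  of the window of length r starting at t \<in> T.\<close>

definition in_window :: "nat \<Rightarrow> nat set \<Rightarrow> nat \<Rightarrow> nat \<Rightarrow> bool" where
  "in_window r T i t \<longleftrightarrow> t \<in> T \<and> t \<le> i \<and> i + 2 < t + r"

definition spaced :: "nat \<Rightarrow> nat set \<Rightarrow> bool" where
  "spaced r T \<longleftrightarrow> (\<forall>t\<in>T. \<forall>t'\<in>T. t < t' \<longrightarrow> t + r \<le> t' + 1)"

lemma non_overlapping_spaced: "non_overlapping p \<Longrightarrow> T \<subseteq> Em p e \<Longrightarrow> spaced (length p) T"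
  unfolding spaced_def using non_overlapping_Em_gap by blast

lemma in_window_unique:
  assumes "spaced r T" "in_window r T i t'" "t \<in> T" "t \<le> i + 1" "i + 2 \<le> t + r"
  shows "t' = t"
proof (rule ccontr)
  assume "t' \<noteq> t"
  have t': "t' \<in> T" "t' \<le> i" "i + 2 < t' + r" using assms(2) by (auto simp: in_window_def)
  show False
  proof (cases "t < t'")
    case True
    then have "t + r \<le> t' + 1" using assms(1,3) t'(1) unfolding spaced_def by blast
    then show False using t' assms(5) by linarith
  next
    case False
    then have "t' + r \<le> t + 1" using \<open>t' \<noteq> t\<close> assms(1,3) t'(1) unfolding spaced_def by auto
    then show False using t' assms(4) by linarith
  qed
qed

definition rearrange :: "nat list \<Rightarrow> nat list \<Rightarrow> nat set \<Rightarrow> nat list \<Rightarrow> nat list" where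
  "rearrange p q T e = map (\<lambda>i. if \<exists>t. in_window (length p) T i t
      then let t = THE t. in_window (length p) T i t in e ! (t - 1 + source_index p q (i + 1 - t))
      else e ! i) [0..<length e]"

lemma length_rearrange [simp]: "length (rearrange p q T e) = length e"
  by (simp add: rearrange_def)

lemma rearrange_nth_outside:
  "\<not> (\<exists>t. in_window (length p) T i t) \<Longrightarrow> i < length e \<Longrightarrow> rearrange p q T e ! i = e ! i"
  by (auto simp: rearrange_def)

lemma rearrange_nth_in_window:
  assumes "spaced (length p) T" "in_window (length p) T i t" "i < length e"
  shows "rearrange p q T e ! i = e ! (t - 1 + source_index p q (i + 1 - t))"
proof -
  have "(THE t. in_window (length p) T i t) = t"
    using assms(2) in_window_unique[OF assms(1) _ _ _] unfolding in_window_def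
    by (intro the_equality) (auto simp: in_window_def)
  then show ?thesis using assms by (auto simp: rearrange_def)
qed

lemma rearrange_nth_window:
  assumes c: "same_ends_and_values p q" and sp: "spaced (length p) T" and TE: "T \<subseteq> Em p e"
    and t: "t \<in> T" and k: "k < length p"
  shows "rearrange p q T e ! (t - 1 + k) = e ! (t - 1 + source_index p q k)"
proof -
  have tE: "t \<in> Em p e" using t TE by blast
  have t1: "1 \<le> t" and i: "t - 1 + k < length e" using EmD(1,2)[OF tE] k by auto
  show ?thesis
  proof (cases "\<exists>t'. in_window (length p) T (t - 1 + k) t'")
    case True
    then obtain t' where t': "in_window (length p) T (t - 1 + k) t'" by blast
    then have "t' = t" using in_window_unique[OF sp t' t] t1 k by simp
    then show ?thesis using rearrange_nth_in_window[OF sp t' i] t1 by simp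
  next
    case False
    then have "\<not> in_window (length p) T (t - 1 + k) t" by blast
    then have "k = 0 \<or> k = length p - 1" using t t1 k by (auto simp: in_window_def)
    then have "p ! source_index p q k = p ! k"
      using source_index_correct(2)[OF c k] c by (auto simp: same_ends_and_values_def)
    then show ?thesis
      using rearrange_nth_outside[OF False i] Em_nth_eq[OF tE source_index_correct(1)[OF c k] k] by simp
  qed
qed

lemma rearrange_Em:
  assumes c: "same_ends_and_values p q" and sp: "spaced (length p) T" and TE: "T \<subseteq> Em p e"
  shows "T \<subseteq> Em q (rearrange p q T e)"
proof
  fix t assume t: "t \<in> T"
  define r where "r = length p"
  define W where "W = factor e t r"
  define W' where "W' = factor (rearrange p q T e) t r"
  have tE: "t \<in> Em p e" using t TE by blast
  have lq: "length q = r" using c by (simp add: same_ends_and_values_def r_def)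
  have t1: "1 \<le> t" and len: "t + r - 1 \<le> length e" using EmD(1,2)[OF tE] by (auto simp: r_def)
  have lW': "length W' = r" using len t1 by (simp add: W'_def factor_def)
  have W'_nth: "W' ! k = e ! (t - 1 + source_index p q k)" if "k < r" for k
    using rearrange_nth_window[OF c sp TE t, of k] that len t1 by (simp add: W'_def factor_def r_def)
  have W'_ranks: "map (rank_in (set W)) W' = q"
    using source_index_correct[OF c] Em_nth_rank(2)[OF tE] lW' lq
    by (intro nth_equalityI) (auto simp: W'_nth W_def r_def)
  have "set W' \<subseteq> set W"
    using source_index_correct(1)[OF c] Em_nth_rank(1)[OF tE] lW'
    by (auto simp: in_set_conv_nth W'_nth W_def r_def)
  then have "reduction W' = reduction q"
    using reduction_map_rank_in[of W' "set W"] W'_ranks by simp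
  also have "\<dots> = q"
    using reduction_eq_self_if_same_set[of p q] reduction_reduction[of W] EmD(3)[OF tE] c
    by (simp add: W_def r_def same_ends_and_values_def)
  finally show "t \<in> Em q (rearrange p q T e)"
    using t1 len lq by (simp add: Em_def W'_def r_def)
qed

lemma rearrange_inv_seqs:
  assumes c: "same_ends_and_values p q" and ch: "changeable p q" and sp: "spaced (length p) T"
    and TE: "T \<subseteq> Em p e" and e: "e \<in> inv_seqs n"
  shows "rearrange p q T e \<in> inv_seqs n"
proof -
  have le: "length e = n" and inv: "\<forall>i<length e. e ! i < Suc i"
    using e by (auto simp: inv_seqs_def)
  have "rearrange p q T e ! i < Suc i" if i: "i < n" for i
  proof (cases "\<exists>t. in_window (length p) T i t")
    case True
    then obtain t where t: "in_window (length p) T i t" by blast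
    define k where "k = i + 1 - t"
    have tT: "t \<in> T" and k: "k < length p" using t by (auto simp: in_window_def k_def)
    have tE: "t \<in> Em p e" using tT TE by blast
    have ik: "i = t - 1 + k" using t EmD(1)[OF tE] by (auto simp: in_window_def k_def)
    have "rearrange p q T e ! i = e ! (t - 1 + source_index p q k)"
      using rearrange_nth_in_window[OF sp t] i le by (simp add: k_def)
    also have "\<dots> \<le> i"
      using changeable_Em_nth_le[OF ch tE inv k source_index_correct[OF c k]] ik by simp
    finally show ?thesis by simp
  next
    case False
    then show ?thesis using rearrange_nth_outside[OF False] i le inv by simp
  qed
  then show ?thesis using le by (simp add: inv_seqs_def)
qed

lemma rearrange_rearrange:
  assumes c: "same_ends_and_values p q" and sp: "spaced (length p) T" and TE: "T \<subseteq> Em p e"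
  shows "rearrange q p T (rearrange p q T e) = e"
proof (rule nth_equalityI)
  fix i assume "i < length (rearrange q p T (rearrange p q T e))"
  then have i: "i < length e" by simp
  have lq: "length q = length p" using c by (simp add: same_ends_and_values_def)
  show "rearrange q p T (rearrange p q T e) ! i = e ! i"
  proof (cases "\<exists>t. in_window (length p) T i t")
    case True
    then obtain t where t: "in_window (length p) T i t" by blast
    define k where "k = i + 1 - t"
    have tT: "t \<in> T" and k: "k < length p" using t by (auto simp: in_window_def k_def)
    have tE: "t \<in> Em p e" using tT TE by blast
    have ik: "i = t - 1 + k" using t EmD(1)[OF tE] by (auto simp: in_window_def k_def)
    have s: "source_index q p k < length p" "q ! source_index q p k = p ! k"
      using source_index_correct[OF same_ends_and_values_sym[OF c]] k lq by auto
    have "rearrange q p T (rearrange p q T e) ! i = rearrange p q T e ! (t - 1 + source_index q p k)"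
      using rearrange_nth_in_window[of q T i t] sp t i lq by (simp add: k_def)
    also have "\<dots> = e ! (t - 1 + source_index p q (source_index q p k))"
      by (rule rearrange_nth_window[OF c sp TE tT s(1)])
    also have "\<dots> = e ! i"
      using Em_nth_eq[OF tE source_index_correct(1)[OF c s(1)] k]
        source_index_correct(2)[OF c s(1)] s(2) ik by simp
    finally show ?thesis .
  next
    case False
    then show ?thesis using rearrange_nth_outside[of p T i] rearrange_nth_outside[of q T i] i lq
      by simp
  qed
qed simp

lemma finite_inv_seqs: "finite (inv_seqs n)"
proof (rule finite_subset)
  show "inv_seqs n \<subseteq> {xs. set xs \<subseteq> {..<n} \<and> length xs = n}"
    by (auto simp: inv_seqs_def in_set_conv_nth less_Suc_eq_le) (meson le_less_trans)
qed (simp add: finite_lists_length_eq)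

lemma card_inv_seqs_supset_Em_le:
  assumes c: "same_ends_and_values p q" and ch: "changeable p q" and no: "non_overlapping p"
  shows "card {e \<in> inv_seqs n. T \<subseteq> Em p e} \<le> card {e \<in> inv_seqs n. T \<subseteq> Em q e}"
proof (rule card_inj_on_le[where f = "rearrange p q T"])
  show "inj_on (rearrange p q T) {e \<in> inv_seqs n. T \<subseteq> Em p e}"
    by (rule inj_on_inverseI[where g = "rearrange q p T"])
       (auto intro: rearrange_rearrange[OF c] non_overlapping_spaced[OF no])
  show "rearrange p q T ` {e \<in> inv_seqs n. T \<subseteq> Em p e} \<subseteq> {e \<in> inv_seqs n. T \<subseteq> Em q e}"
    using rearrange_inv_seqs[OF c ch] rearrange_Em[OF c] non_overlapping_spaced[OF no] by blast
qed (simp add: finite_inv_seqs)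

lemma card_inv_seqs_supset_Em_eq_sum:
  assumes "p \<noteq> []" "T \<subseteq> {1..n}"
  shows "card {e \<in> inv_seqs n. T \<subseteq> Em p e} =
    (\<Sum>U | T \<subseteq> U \<and> U \<subseteq> {1..n}. card {e \<in> inv_seqs n. Em p e = U})"
proof -
  have "1 \<le> length p" using assms(1) by (cases p) auto
  then have "Em p e \<subseteq> {1..n}" if "e \<in> inv_seqs n" for e
    using that EmD(1,2)[of _ p e] by (fastforce simp: inv_seqs_def)
  then have "{e \<in> inv_seqs n. T \<subseteq> Em p e} =
      (\<Union>U\<in>{U. T \<subseteq> U \<and> U \<subseteq> {1..n}}. {e \<in> inv_seqs n. Em p e = U})"
    by blast
  moreover have "finite {U. T \<subseteq> U \<and> U \<subseteq> {1..n::nat}}"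
    by (rule finite_subset[of _ "Pow {1..n}"]) auto
  ultimately show ?thesis
    by (subst \<open>_ = _\<close>, subst card_UN_disjoint) (auto simp: finite_inv_seqs)
qed

lemma sum_supsets_eq_imp_eq:
  fixes f g :: "'a set \<Rightarrow> 'b::cancel_comm_monoid_add"
  assumes "finite S"
    and "\<And>U. U \<subseteq> S \<Longrightarrow> (\<Sum>V | U \<subseteq> V \<and> V \<subseteq> S. f V) = (\<Sum>V | U \<subseteq> V \<and> V \<subseteq> S. g V)"
  shows "T \<subseteq> S \<Longrightarrow> f T = g T"
proof (induction "card (S - T)" arbitrary: T rule: less_induct)
  case less
  define UU where "UU = {V. T \<subseteq> V \<and> V \<subseteq> S}"
  have fin: "finite UU" unfolding UU_def
    by (rule finite_subset[of _ "Pow S"]) (auto simp: assms(1))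
  have T: "T \<in> UU" using less.prems by (simp add: UU_def)
  have "(\<Sum>V\<in>UU - {T}. f V) = (\<Sum>V\<in>UU - {T}. g V)"
  proof (rule sum.cong)
    fix V assume "V \<in> UU - {T}"
    then have "V \<subseteq> S" "S - V \<subset> S - T" by (auto simp: UU_def)
    then show "f V = g V"
      using less.hyps assms(1) by (meson finite_Diff psubset_card_mono)
  qed simp
  moreover have "f T + (\<Sum>V\<in>UU - {T}. f V) = g T + (\<Sum>V\<in>UU - {T}. g V)"
    using assms(2)[OF less.prems] sum.remove[OF fin T, of f] sum.remove[OF fin T, of g]
    by (simp add: UU_def)
  ultimately show ?case by simp
qed

theorem mainTheorem3:
  fixes p p' :: "nat list"
  assumes "is_pattern p" and "is_pattern p'"
    and "length p = length p'"
    and "non_overlapping p" and "non_overlapping p'"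
    and "interchangeable p p'"
  shows "super_strongly_wilf_equiv p p'"
  unfolding super_strongly_wilf_equiv_def
proof (intro allI impI)
  fix n and T :: "nat set" assume T: "T \<subseteq> {1..n}"
  have ch: "changeable p p'" "changeable p' p"
    using assms(6) by (auto simp: interchangeable_def)
  have c: "same_ends_and_values p p'" "same_ends_and_values p' p"
    using changeable_same_ends_and_values[OF assms(1,2) ch(1)]
      changeable_same_ends_and_values[OF assms(2,1) ch(2)] .
  then have nonempty: "p \<noteq> []" "p' \<noteq> []" by (auto simp: same_ends_and_values_def)
  have supsets: "card {e \<in> inv_seqs n. U \<subseteq> Em p e} = card {e \<in> inv_seqs n. U \<subseteq> Em p' e}"
    for U
    using card_inv_seqs_supset_Em_le[OF c(1) ch(1) assms(4)]
      card_inv_seqs_supset_Em_le[OF c(2) ch(2) assms(5)] by (rule antisym)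
  show "card {e \<in> inv_seqs n. Em p e = T} = card {e \<in> inv_seqs n. Em p' e = T}"
  proof (rule sum_supsets_eq_imp_eq[OF finite_atLeastAtMost _ T])
    fix U assume "U \<subseteq> {1..n}"
    then show "(\<Sum>V | U \<subseteq> V \<and> V \<subseteq> {1..n}. card {e \<in> inv_seqs n. Em p e = V}) =
        (\<Sum>V | U \<subseteq> V \<and> V \<subseteq> {1..n}. card {e \<in> inv_seqs n. Em p' e = V})"
      using card_inv_seqs_supset_Em_eq_sum[OF nonempty(1) \<open>U \<subseteq> _\<close>]
        card_inv_seqs_supset_Em_eq_sum[OF nonempty(2) \<open>U \<subseteq> _\<close>] supsets[of U] by simp
  qed
qed

end
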